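(* Let $\mathcal{G}=(\mathcal{V},\mathcal{E},w)$ be a simple connected weighted graph with at least one edge and with $d(v)\ge 1$ for all $v\in\mathcal{V}$. Let $s\in\mathcal{V}$, $\beta\in(0,1)$, and let $x$ solve $Tx=\beta r$ with $T=\beta D+D^{-1}L$ and $r$ the indicator vector of $s$. Then for every proper subset $\mathcal{C}\subsetneq\mathcal{V}$ with $s\in\mathcal{C}$, $$x[\bar{\mathcal{C}}]<\frac{1}{\beta}\,w(\partial(\mathcal{C})).$$
   Context: $d(v)=\sum_{u\sim v}w(u,v)$ is the weighted degree, $D=\operatorname{diag}(d(v))$, $L=D-A$ the combinatorial Laplacian. $r(s)=1$, $r(v)=0$ for $v\ne s$. For $\mathcal{S}\subseteq\mathcal{V}$, $\bar{\mathcal{S}}=\mathcal{V}\setminus\mathcal{S}$, $x[\mathcal{S}]=\sum_{v\in\mathcal{S}}x(v)$, $\partial(\mathcal{S})=\{\{u,v\}\in\mathcal{E}: u\in\mathcal{S},v\in\bar{\mathcal{S}}\}$ and $w(\partial(\mathcal{S}))=\sum_{e\in\partial(\mathcal{S})}w(e)$. *)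

theory Defs
  imports Main "HOL-Analysis.Analysis"
begin

definition simple_wgraph :: "'a set \<Rightarrow> 'a set set \<Rightarrow> ('a set \<Rightarrow> real) \<Rightarrow> bool" where
  "simple_wgraph V E w \<longleftrightarrow> finite V \<and> (\<forall>e\<in>E. e \<subseteq> V \<and> card e = 2 \<and> w e > 0)"

definition graph_connected :: "'a set \<Rightarrow> 'a set set \<Rightarrow> bool" where
  "graph_connected V E \<longleftrightarrow>
     (\<forall>u\<in>V. \<forall>v\<in>V. (u, v) \<in> {(a, b). {a, b} \<in> E}\<^sup>*)"

definition wdeg :: "'a set set \<Rightarrow> ('a set \<Rightarrow> real) \<Rightarrow> 'a \<Rightarrow> real" where
  "wdeg E w v = (\<Sum>e\<in>{e\<in>E. v \<in> e}. w e)"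

definition adjw :: "'a set set \<Rightarrow> ('a set \<Rightarrow> real) \<Rightarrow> 'a \<Rightarrow> 'a \<Rightarrow> real" where
  "adjw E w u v = (if {u, v} \<in> E then w {u, v} else 0)"

definition lap_apply :: "'a set \<Rightarrow> 'a set set \<Rightarrow> ('a set \<Rightarrow> real) \<Rightarrow> ('a \<Rightarrow> real) \<Rightarrow> 'a \<Rightarrow> real" where
  "lap_apply V E w x v = wdeg E w v * x v - (\<Sum>u\<in>V. adjw E w v u * x u)"

definition T_apply :: "'a set \<Rightarrow> 'a set set \<Rightarrow> ('a set \<Rightarrow> real) \<Rightarrow> real \<Rightarrow> ('a \<Rightarrow> real) \<Rightarrow> 'a \<Rightarrow> real" where
  "T_apply V E w \<beta> x v = \<beta> * wdeg E w v * x v + lap_apply V E w x v / wdeg E w v"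

definition ind_vec :: "'a \<Rightarrow> 'a \<Rightarrow> real" where
  "ind_vec s v = (if v = s then 1 else 0)"

definition edge_boundary :: "'a set \<Rightarrow> 'a set set \<Rightarrow> 'a set \<Rightarrow> 'a set set" where
  "edge_boundary V E S = {e\<in>E. \<exists>u\<in>S. \<exists>v\<in>V - S. e = {u, v}}"

end

theory Submission
  imports Defs
begin

text \<open>
  Write the equation as \<open>L x = \<beta> D (r - D x)\<close>. A minimum principle gives \<open>x \<ge> 0\<close> and a
  maximum principle (using that \<open>s\<close> has a neighbour) gives \<open>x < 1\<close>. Summing \<open>L x\<close> over
  \<open>C\<^sup>c\<close>, the contributions of edges inside \<open>C\<^sup>c\<close> cancel, so
  \<open>\<beta> x[C\<^sup>c] \<le> \<beta> \<Sum>\<^sub>v\<^sub>\<notin>\<^sub>C d(v)\<^sup>2 x(v)\<close> is the net flow \<open>\<Sum> w(u,v) (x(u) - x(v))\<close> across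
  \<open>\<partial>(C)\<close>, which is at most \<open>\<Sum> w(u,v) x(u) < w(\<partial>(C))\<close>; strictness comes from a boundary
  edge, which exists by connectivity.
\<close>

lemma sum_sum_antisym_eq_0:
  fixes A :: "'a \<Rightarrow> 'a \<Rightarrow> real"
  assumes "\<And>u v. A u v = A v u"
  shows "(\<Sum>v\<in>B. \<Sum>u\<in>B. A v u * (x v - x u)) = 0"
proof -
  have "(\<Sum>v\<in>B. \<Sum>u\<in>B. A v u * x u) = (\<Sum>u\<in>B. \<Sum>v\<in>B. A v u * x u)"
    by (rule sum.swap)
  also have "\<dots> = (\<Sum>v\<in>B. \<Sum>u\<in>B. A v u * x v)"
    using assms by simp
  finally show ?thesis
    by (simp add: right_diff_distrib sum_subtractf)
qed

locale weighted_graph =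
  fixes V :: "'a set" and E :: "'a set set" and w :: "'a set \<Rightarrow> real"
  assumes simple: "simple_wgraph V E w"
begin

lemma finite_V: "finite V"
  and edge_subset: "e \<in> E \<Longrightarrow> e \<subseteq> V"
  and edge_card: "e \<in> E \<Longrightarrow> card e = 2"
  and weight_pos: "e \<in> E \<Longrightarrow> w e > 0"
  using simple unfolding simple_wgraph_def by auto

lemma adjw_nonneg: "adjw E w u v \<ge> 0"
  unfolding adjw_def using weight_pos by (auto intro: less_imp_le)

lemma adjw_sym: "adjw E w u v = adjw E w v u"
  unfolding adjw_def by (simp add: insert_commute)

lemma edge_containing_obtain:
  assumes "e \<in> E" "v \<in> e"
  obtains u where "u \<in> V" "u \<noteq> v" "e = {v, u}"
proof -
  obtain a b where ab: "e = {a, b}" "a \<noteq> b"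
    using edge_card[OF assms(1)] by (auto simp: card_2_iff)
  then show ?thesis
    using that assms edge_subset[OF assms(1)] by (auto simp: insert_commute)
qed

lemma wdeg_eq_sum_adjw:
  assumes "v \<in> V"
  shows "wdeg E w v = (\<Sum>u\<in>V. adjw E w v u)"
proof -
  have "(\<Sum>u\<in>V. adjw E w v u) = (\<Sum>u\<in>{u\<in>V. {v, u} \<in> E}. w {v, u})"
    unfolding adjw_def using finite_V by (simp add: sum.inter_filter)
  also have "\<dots> = (\<Sum>e\<in>(\<lambda>u. {v, u}) ` {u\<in>V. {v, u} \<in> E}. w e)"
    by (rule sum.reindex[symmetric, unfolded comp_def]) (auto simp: inj_on_def doubleton_eq_iff)
  also have "(\<lambda>u. {v, u}) ` {u\<in>V. {v, u} \<in> E} = {e\<in>E. v \<in> e}"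
  proof (intro equalityI subsetI)
    fix e
    assume "e \<in> {e\<in>E. v \<in> e}"
    then obtain u where "u \<in> V" "e = {v, u}" "e \<in> E"
      by (auto elim: edge_containing_obtain)
    then show "e \<in> (\<lambda>u. {v, u}) ` {u\<in>V. {v, u} \<in> E}"
      by auto
  qed auto
  finally show ?thesis
    unfolding wdeg_def by simp
qed

lemma lap_apply_eq_sum_diff:
  assumes "v \<in> V"
  shows "lap_apply V E w x v = (\<Sum>u\<in>V. adjw E w v u * (x v - x u))"
  unfolding lap_apply_def wdeg_eq_sum_adjw[OF assms]
  by (simp add: right_diff_distrib sum_subtractf sum_distrib_right)

lemma lap_apply_nonpos_at_min:
  assumes "v \<in> V" "\<forall>u\<in>V. x v \<le> x u"
  shows "lap_apply V E w x v \<le> 0"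
  unfolding lap_apply_eq_sum_diff[OF assms(1)]
  using assms adjw_nonneg by (intro sum_nonpos mult_nonneg_nonpos) auto

lemma lap_apply_nonneg_at_max:
  assumes "v \<in> V" "\<forall>u\<in>V. x u \<le> x v"
  shows "lap_apply V E w x v \<ge> 0"
  unfolding lap_apply_eq_sum_diff[OF assms(1)]
  using assms adjw_nonneg by (intro sum_nonneg) auto

lemma lap_apply_pos_at_max:
  assumes "v \<in> V" "\<forall>u\<in>V. x u \<le> x v" "t \<in> V" "adjw E w v t > 0" "x t < x v"
  shows "lap_apply V E w x v > 0"
proof -
  have "0 < adjw E w v t * (x v - x t)"
    using assms by simp
  also have "\<dots> \<le> (\<Sum>u\<in>V. adjw E w v u * (x v - x u))"
    using assms finite_V adjw_nonneg by (intro member_le_sum) auto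
  finally show ?thesis
    using lap_apply_eq_sum_diff[OF assms(1)] by simp
qed

lemma sum_lap_apply_compl_eq_flow:
  assumes "C \<subseteq> V"
  shows "(\<Sum>v\<in>V - C. lap_apply V E w x v) = (\<Sum>v\<in>V - C. \<Sum>u\<in>C. adjw E w v u * (x v - x u))"
proof -
  have "lap_apply V E w x v = (\<Sum>u\<in>C. adjw E w v u * (x v - x u))
      + (\<Sum>u\<in>V - C. adjw E w v u * (x v - x u))" if "v \<in> V - C" for v
    using that lap_apply_eq_sum_diff sum.subset_diff[OF assms finite_V] by (metis DiffD1 add.commute)
  then have "(\<Sum>v\<in>V - C. lap_apply V E w x v)
      = (\<Sum>v\<in>V - C. \<Sum>u\<in>C. adjw E w v u * (x v - x u))
      + (\<Sum>v\<in>V - C. \<Sum>u\<in>V - C. adjw E w v u * (x v - x u))"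
    by (simp add: sum.distrib)
  then show ?thesis
    using sum_sum_antisym_eq_0[of "adjw E w", OF adjw_sym] by simp
qed

lemma edge_boundary_weight_eq:
  assumes "C \<subseteq> V"
  shows "(\<Sum>e\<in>edge_boundary V E C. w e) = (\<Sum>v\<in>V - C. \<Sum>u\<in>C. adjw E w v u)"
proof -
  have fC: "finite C"
    using finite_V assms finite_subset by blast
  let ?P = "{p\<in>(V - C) \<times> C. {fst p, snd p} \<in> E}"
  have "(\<Sum>v\<in>V - C. \<Sum>u\<in>C. adjw E w v u) = (\<Sum>p\<in>(V - C) \<times> C. adjw E w (fst p) (snd p))"
    by (simp add: sum.cartesian_product split_def)
  also have "\<dots> = (\<Sum>p\<in>?P. w {fst p, snd p})"
    unfolding adjw_def using finite_V fC by (simp add: sum.inter_filter)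
  also have "\<dots> = (\<Sum>e\<in>(\<lambda>p. {fst p, snd p}) ` ?P. w e)"
    by (rule sum.reindex[symmetric, unfolded comp_def]) (auto simp: inj_on_def doubleton_eq_iff)
  also have "(\<lambda>p. {fst p, snd p}) ` ?P = edge_boundary V E C"
    unfolding edge_boundary_def
    by (force simp: insert_commute)
  finally show ?thesis
    by simp
qed

lemma boundary_edge_exists:
  assumes "graph_connected V E" "s \<in> C" "C \<subset> V"
  obtains y z where "y \<in> C" "z \<in> V - C" "{y, z} \<in> E"
proof -
  obtain z0 where z0: "z0 \<in> V - C"
    using assms(3) by auto
  have "(s, z0) \<in> {(a, b). {a, b} \<in> E}\<^sup>*"
    using assms z0 unfolding graph_connected_def by auto
  then have "z0 \<in> C \<or> (\<exists>y\<in>C. \<exists>z\<in>V - C. {y, z} \<in> E)"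
  proof (induction rule: rtrancl_induct)
    case base
    then show ?case using assms(2) by simp
  next
    case (step b c)
    then show ?case
      using edge_subset[of "{b, c}"] by blast
  qed
  then show ?thesis
    using that z0 by blast
qed

end

locale ppr_solution = weighted_graph +
  fixes \<beta> :: real and s :: 'a and x :: "'a \<Rightarrow> real"
  assumes deg_ge_1: "\<forall>v\<in>V. wdeg E w v \<ge> 1"
    and s_in_V: "s \<in> V"
    and beta_pos: "0 < \<beta>"
    and solves: "\<forall>v\<in>V. T_apply V E w \<beta> x v = \<beta> * ind_vec s v"
begin

abbreviation d :: "'a \<Rightarrow> real" where "d \<equiv> wdeg E w"

lemma lap_apply_solution:
  assumes "v \<in> V"
  shows "lap_apply V E w x v = \<beta> * d v * (ind_vec s v - d v * x v)"
proof -
  have "d v \<ge> 1"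
    using deg_ge_1 assms by auto
  moreover have "\<beta> * d v * x v + lap_apply V E w x v / d v = \<beta> * ind_vec s v"
    using solves assms unfolding T_apply_def by auto
  ultimately show ?thesis
    by (simp add: field_simps)
qed

lemma lap_apply_nonneg_iff:
  assumes "v \<in> V"
  shows "lap_apply V E w x v \<ge> 0 \<longleftrightarrow> d v * x v \<le> ind_vec s v"
proof -
  have "\<beta> * d v > 0"
    using beta_pos deg_ge_1 assms by force
  then show ?thesis
    unfolding lap_apply_solution[OF assms] by (subst zero_le_mult_iff) auto
qed

lemma lap_apply_pos_iff:
  assumes "v \<in> V"
  shows "lap_apply V E w x v > 0 \<longleftrightarrow> d v * x v < ind_vec s v"
proof -
  have "\<beta> * d v > 0"
    using beta_pos deg_ge_1 assms by force
  then show ?thesis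
    unfolding lap_apply_solution[OF assms] by (subst zero_less_mult_iff) auto
qed

lemma solution_nonneg:
  assumes "u \<in> V"
  shows "x u \<ge> 0"
proof -
  obtain m where m: "m \<in> V" and m_min: "\<forall>u\<in>V. x m \<le> x u"
    using arg_min_if_finite[where S=V and f=x] arg_min_least[where S=V and f=x]
      finite_V s_in_V by blast
  have "ind_vec s m \<le> d m * x m"
    using lap_apply_nonpos_at_min[OF m(1) m_min] lap_apply_pos_iff[OF m(1)] by linarith
  then have "0 \<le> d m * x m"
    unfolding ind_vec_def by (auto split: if_splits)
  then have "x m \<ge> 0"
    using deg_ge_1 m(1) by (auto simp: zero_le_mult_iff)
  then show ?thesis
    using m_min assms by force
qed

lemma solution_nonpos_at_max_off_s:
  assumes "v \<in> V" "\<forall>u\<in>V. x u \<le> x v" "v \<noteq> s"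
  shows "x v \<le> 0"
proof -
  have "d v * x v \<le> 0"
    using lap_apply_nonneg_at_max[OF assms(1,2)] lap_apply_nonneg_iff[OF assms(1)] assms(3)
    by (simp add: ind_vec_def)
  then show ?thesis
    using deg_ge_1 assms(1) by (auto simp: mult_le_0_iff)
qed

lemma neighbour_of_s_exists:
  obtains t where "t \<in> V" "t \<noteq> s" "adjw E w s t > 0"
proof -
  have "{e\<in>E. s \<in> e} \<noteq> {}"
  proof
    assume "{e\<in>E. s \<in> e} = {}"
    then have "d s = 0"
      unfolding wdeg_def by (simp only: sum.empty)
    then show False
      using deg_ge_1 s_in_V by auto
  qed
  then obtain e where e: "e \<in> E" "s \<in> e"
    by auto
  then obtain t where "t \<in> V" "t \<noteq> s" "e = {s, t}"
    by (rule edge_containing_obtain)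
  then show ?thesis
    using that e weight_pos unfolding adjw_def by auto
qed

text \<open>
  At a maximiser \<open>v \<noteq> s\<close> we get \<open>x v \<le> 0\<close>. If the maximum \<open>x s \<ge> 1\<close> were attained
  only at \<open>s\<close>, a neighbour \<open>t\<close> with \<open>x t < x s\<close> would make \<open>L x (s) > 0\<close>, while
  \<open>d(s) x(s) \<ge> 1\<close> forces \<open>L x (s) \<le> 0\<close>.
\<close>
lemma solution_less_1:
  assumes "u \<in> V"
  shows "x u < 1"
proof -
  obtain M where M: "M \<in> V" and M_max: "\<forall>u\<in>V. x u \<le> x M"
    using arg_min_if_finite[where S=V and f="\<lambda>v. - x v"]
      arg_min_least[where S=V and f="\<lambda>v. - x v"] finite_V s_in_V
    by (metis empty_iff neg_le_iff_le)
  have "x M < 1"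
  proof (rule ccontr)
    assume "\<not> x M < 1"
    then have M_is_s: "M = s"
      using solution_nonpos_at_max_off_s[OF M(1) M_max] by force
    then have xs: "x s \<ge> 1"
      using \<open>\<not> x M < 1\<close> by simp
    obtain t where t: "t \<in> V" "t \<noteq> s" "adjw E w s t > 0"
      by (rule neighbour_of_s_exists)
    have "x t < x s"
      using solution_nonpos_at_max_off_s[OF t(1) _ t(2)] M_max M_is_s xs by force
    then have "lap_apply V E w x s > 0"
      using lap_apply_pos_at_max[OF s_in_V _ t(1) t(3)] M_max M_is_s by blast
    moreover have "d s * x s \<ge> 1"
      using deg_ge_1 s_in_V xs by (metis mult_mono mult_1 order_trans zero_le_one)
    ultimately show False
      using lap_apply_pos_iff[OF s_in_V] by (simp add: ind_vec_def)
  qed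
  then show ?thesis
    using M_max assms by force
qed

theorem mass_outside_lt_boundary:
  assumes "graph_connected V E" "C \<subset> V" "s \<in> C"
  shows "\<beta> * (\<Sum>v\<in>V - C. x v) < (\<Sum>e\<in>edge_boundary V E C. w e)"
proof -
  have CV: "C \<subseteq> V"
    using assms(2) by auto
  have xle: "x v \<le> d v * d v * x v" if "v \<in> V" for v
  proof -
    have "1 * 1 \<le> d v * d v"
      using deg_ge_1 that by (intro mult_mono) auto
    then show ?thesis
      using solution_nonneg[OF that] mult_right_mono by fastforce
  qed
  obtain y z where yz: "y \<in> C" "z \<in> V - C" "{y, z} \<in> E"
    using boundary_edge_exists[OF assms(1,3,2)] .
  have "\<beta> * (\<Sum>v\<in>V - C. x v) \<le> \<beta> * (\<Sum>v\<in>V - C. d v * d v * x v)"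
    using beta_pos xle by (intro mult_left_mono sum_mono) auto
  also have "\<dots> = - (\<Sum>v\<in>V - C. lap_apply V E w x v)"
    using assms(3)
    by (auto simp: lap_apply_solution ind_vec_def sum_distrib_left sum_negf[symmetric] algebra_simps
        intro!: sum.cong)
  also have "\<dots> = (\<Sum>v\<in>V - C. \<Sum>u\<in>C. adjw E w v u * (x u - x v))"
    unfolding sum_lap_apply_compl_eq_flow[OF CV] by (simp add: sum_negf[symmetric] algebra_simps)
  also have "\<dots> \<le> (\<Sum>v\<in>V - C. \<Sum>u\<in>C. adjw E w v u * x u)"
    using solution_nonneg adjw_nonneg CV by (intro sum_mono mult_left_mono) auto
  also have "\<dots> < (\<Sum>v\<in>V - C. \<Sum>u\<in>C. adjw E w v u)"
  proof -
    have le: "adjw E w v u * x u \<le> adjw E w v u" if "u \<in> C" for u v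
      using solution_less_1 that CV adjw_nonneg by (intro mult_left_le) (auto intro: less_imp_le)
    have "adjw E w z y > 0"
      using yz weight_pos unfolding adjw_def by (auto simp: insert_commute)
    then have "adjw E w z y * x y < adjw E w z y"
      using solution_less_1[of y] yz CV by auto
    then have "(\<Sum>u\<in>C. adjw E w z u * x u) < (\<Sum>u\<in>C. adjw E w z u)"
      using le finite_V CV yz(1) by (intro sum_strict_mono_ex1) (auto intro: finite_subset)
    then show ?thesis
      using le finite_V yz(2) by (intro sum_strict_mono_ex1) (auto intro!: sum_mono)
  qed
  also have "\<dots> = (\<Sum>e\<in>edge_boundary V E C. w e)"
    using edge_boundary_weight_eq[OF CV] by simp
  finally show ?thesis .
qed

end

theorem mainTheorem5:
  fixes V :: "'a set" and E :: "'a set set" and w :: "'a set \<Rightarrow> real"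
    and s :: 'a and \<beta> :: real and x :: "'a \<Rightarrow> real" and C :: "'a set"
  assumes graph: "simple_wgraph V E w"
    and conn: "graph_connected V E"
    and edge: "E \<noteq> {}"
    and deg: "\<forall>v\<in>V. wdeg E w v \<ge> 1"
    and sV: "s \<in> V"
    and beta: "0 < \<beta>" "\<beta> < 1"
    and sol: "\<forall>v\<in>V. T_apply V E w \<beta> x v = \<beta> * ind_vec s v"
    and CV: "C \<subset> V" and sC: "s \<in> C"
  shows "(\<Sum>v\<in>V - C. x v) < (1 / \<beta>) * (\<Sum>e\<in>edge_boundary V E C. w e)"
proof -
  interpret ppr_solution V E w \<beta> s x
    using graph deg sV beta(1) sol by unfold_locales
  have "\<beta> * (\<Sum>v\<in>V - C. x v) < (\<Sum>e\<in>edge_boundary V E C. w e)"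
    using mass_outside_lt_boundary[OF conn CV sC] .
  then show ?thesis
    using beta(1) by (simp add: field_simps)
qed

end
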